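(* Let $\{(U_{k,i}, V_{k,i}); i \geq 1, k \geq 1\}$ be an array of i.i.d. two-dimensional random vectors. Let $\{a_n; n \geq 1\}$ be a nondecreasing sequence of positive constants such that $$\lim_{n \to \infty} a_{n+1}/a_n = 1 \quad \text{and} \quad \liminf_{n \to \infty} a_{2n}/a_n = b \in (1, \infty].$$ Then for every $c > 0$ and $q > 1$ the following three statements are equivalent: (1) $\sum_{n=1}^{\infty} P\big(\max_{1 \leq i \neq j \leq n} |U_{1,i} V_{1,j}| \geq a_n\big) < \infty$; (2) $\sum_{n=1}^{\infty} P\big(\max_{1 \leq i \neq j \leq cn} |U_{1,i} V_{1,j}| \geq \varepsilon a_n\big) < \infty$ for all $\varepsilon > 0$; (3) $\sum_{n=1}^{\infty} P\big(\max_{1 \leq m \leq q^n} \max_{1 \leq i \neq j \leq cm} |U_{m,i} V_{m,j}| \geq \varepsilon a_{[q^n]}\big) < \infty$ for all $\varepsilon > 0$.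
   Context: $[x]$ denotes the integer part of $x$. *)

theory Defs
  imports "HOL-Probability.Probability"
begin

end

theory Submission
  imports Defs
begin

(*
  Let p(n, t) be the probability that |U i * V j| >= t for some i ~= j <= n within one row.
  Any two distinct indices lie in the union of two of three blocks of length about n/3, so
  p(n, t) <= 3 p(n - n div 3, t); iterating, p(n, t) <= K p(m, t) whenever n <= r m, with K
  depending only on r. Hence the row length may be rescaled by a constant factor at bounded
  cost, and liminf a(2n)/a(n) > 1 gives a(m) <= eps a(n) as soon as n >= D m, so that eps can
  be absorbed into a change of index: this yields (1) <=> (2). For (3), the rows are independent
  copies of each other, so the probability of the union over the rows m <= q^n is comparable to
  the sum of the row probabilities once it is at most 1/2, which eventually holds under (3).
  Grouping the terms of (2) into blocks q^n < k <= q^(n+1), on which both the row length c k and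
  the level a(k) vary by bounded factors, yields (2) <=> (3).
*)


section \<open>Sequences, series and integer parts\<close>

lemma real_le_iff_le_nat_floor:
  assumes "1 \<le> i"
  shows "real i \<le> y \<longleftrightarrow> i \<le> nat \<lfloor>y\<rfloor>"
proof
  assume "i \<le> nat \<lfloor>y\<rfloor>"
  with assms have "real i \<le> real_of_int \<lfloor>y\<rfloor>" by linarith
  then show "real i \<le> y" by linarith
qed (rule le_nat_floor)

lemma half_le_nat_floor: "2 \<le> y \<Longrightarrow> y / 2 \<le> real (nat \<lfloor>y\<rfloor>)"
  using real_of_int_floor_gt_diff_one[of y] by linarith

lemma mono_from_Suc:
  fixes a :: "nat \<Rightarrow> 'a::preorder"
  assumes "\<And>n. n \<ge> k \<Longrightarrow> a n \<le> a (Suc n)" "k \<le> i" "i \<le> j"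
  shows "a i \<le> a j"
  using assms(3)
proof (induction j rule: dec_induct)
  case (step j)
  then show ?case using assms(1)[of j] assms(2) order_trans by auto
qed simp

lemma prod_one_minus_mult_one_plus_sum_le:
  fixes p :: "'i \<Rightarrow> real"
  assumes "\<And>k. k \<in> J \<Longrightarrow> 0 \<le> p k" "\<And>k. k \<in> J \<Longrightarrow> p k \<le> 1"
  shows "(\<Prod>k\<in>J. 1 - p k) * (1 + (\<Sum>k\<in>J. p k)) \<le> 1"
  using assms
proof (induction J rule: infinite_finite_induct)
  case (insert j J)
  define P where "P = (\<Prod>k\<in>J. 1 - p k)"
  define s where "s = (\<Sum>k\<in>J. p k)"
  have IH: "P * (1 + s) \<le> 1" and "0 \<le> P" "P \<le> 1" and pj: "0 \<le> p j" "p j \<le> 1"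
    using insert unfolding P_def s_def by (auto intro!: prod_nonneg prod_le_1)
  have "(1 - p j) * P * (1 + (p j + s)) = (1 - p j) * (P * (1 + s)) + (1 - p j) * p j * P"
    by (simp add: algebra_simps)
  also have "\<dots> \<le> (1 - p j) * 1 + (1 - p j) * p j * 1"
    using IH pj \<open>0 \<le> P\<close> \<open>P \<le> 1\<close> by (intro add_mono mult_left_mono) auto
  also have "\<dots> \<le> 1"
    using pj by (simp add: algebra_simps)
  finally show ?case
    using insert unfolding P_def s_def by simp
qed simp_all

lemma summable_comp_div:
  fixes f :: "nat \<Rightarrow> real"
  assumes "summable f" "\<And>n. 0 \<le> f n" "D > 0"
  shows "summable (\<lambda>n. f (n div D))"
proof (rule summableI_nonneg_bounded)
  fix N
  have "(\<Sum>n<N. f (n div D)) \<le> (\<Sum>n<N * D. f (n div D))"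
    using assms by (intro sum_mono2) auto
  also have "\<dots> = (\<Sum>m<N. \<Sum>n\<in>{m*D..<m*D+D}. f (n div D))"
    by (rule sum.nat_group[symmetric])
  also have "\<dots> = (\<Sum>m<N. real D * f m)"
  proof (intro sum.cong refl)
    fix m
    have "n div D = m" if "n \<in> {m*D..<m*D+D}" for n
      using that assms(3) by (auto simp: div_nat_eqI mult.commute)
    then show "(\<Sum>n\<in>{m*D..<m*D+D}. f (n div D)) = real D * f m" by simp
  qed
  also have "\<dots> \<le> real D * suminf f"
    using assms by (auto simp: sum_distrib_left[symmetric] intro!: mult_left_mono sum_le_suminf)
  finally show "(\<Sum>n<N. f (n div D)) \<le> real D * suminf f" .
qed (use assms in auto)

lemma sum_blocks:
  fixes f :: "nat \<Rightarrow> real"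
  assumes "mono N"
  shows "(\<Sum>n<M. \<Sum>k\<in>{N n<..N (Suc n)}. f k) = (\<Sum>k\<in>{N 0<..N M}. f k)"
proof (induction M)
  case (Suc M)
  have "N 0 \<le> N M" "N M \<le> N (Suc M)" using assms by (simp_all add: monoD)
  then have "{N 0<..N (Suc M)} = {N 0<..N M} \<union> {N M<..N (Suc M)}" by auto
  moreover have "{N 0<..N M} \<inter> {N M<..N (Suc M)} = {}" by auto
  ultimately show ?case
    using Suc by (simp add: sum.union_disjoint)
qed simp

lemma summable_iff_summable_blocks:
  fixes f :: "nat \<Rightarrow> real"
  assumes "mono N" "filterlim N at_top sequentially" "\<And>n. 0 \<le> f n"
  shows "summable f \<longleftrightarrow> summable (\<lambda>n. \<Sum>k\<in>{N n<..N (Suc n)}. f k)"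
proof -
  note partial_sums = sum_blocks[OF assms(1), where f = f]
  have blocks_nonneg: "0 \<le> (\<Sum>k\<in>{N n<..N (Suc n)}. f k)" for n
    using assms(3) by (intro sum_nonneg)
  show ?thesis
  proof
    assume "summable f"
    show "summable (\<lambda>n. \<Sum>k\<in>{N n<..N (Suc n)}. f k)"
    proof (rule summableI_nonneg_bounded)
      show "(\<Sum>n<M. \<Sum>k\<in>{N n<..N (Suc n)}. f k) \<le> suminf f" for M
        unfolding partial_sums using \<open>summable f\<close> assms(3) by (intro sum_le_suminf) auto
    qed (rule blocks_nonneg)
  next
    assume blocks: "summable (\<lambda>n. \<Sum>k\<in>{N n<..N (Suc n)}. f k)"
    show "summable f"
    proof (rule summableI_nonneg_bounded)
      fix L
      have "eventually (\<lambda>n. L \<le> N n) sequentially"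
        using assms(2) by (simp add: filterlim_at_top)
      then obtain M where "L \<le> N M"
        unfolding eventually_sequentially by (meson order_refl)
      then have "(\<Sum>k<L. f k) \<le> (\<Sum>k\<in>{..N 0} \<union> {N 0<..N M}. f k)"
        using assms(3) by (intro sum_mono2) auto
      also have "\<dots> = (\<Sum>k\<le>N 0. f k) + (\<Sum>n<M. \<Sum>k\<in>{N n<..N (Suc n)}. f k)"
        unfolding partial_sums by (rule sum.union_disjoint) auto
      also have "\<dots> \<le> (\<Sum>k\<le>N 0. f k) + suminf (\<lambda>n. \<Sum>k\<in>{N n<..N (Suc n)}. f k)"
        using blocks blocks_nonneg by (intro add_left_mono sum_le_suminf) auto
      finally show "(\<Sum>k<L. f k) \<le> \<dots>" .
    qed (rule assms(3))
  qed
qed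

lemma eventually_le_power:
  fixes q :: real
  assumes "q > 1"
  shows "eventually (\<lambda>n. B \<le> q ^ n) sequentially"
proof -
  obtain n0 where "B < q ^ n0" using real_arch_pow[OF assms] by blast
  moreover have "q ^ n0 \<le> q ^ n" if "n \<ge> n0" for n
    using assms that by (intro power_increasing) auto
  ultimately show ?thesis
    unfolding eventually_sequentially by (meson less_imp_le order_trans)
qed

lemma eventually_le_mult_at_top:
  fixes f :: "'a \<Rightarrow> nat"
  assumes "c > 0" "filterlim f at_top F"
  shows "eventually (\<lambda>x. B \<le> c * real (f x)) F"
proof -
  have "filterlim (\<lambda>x. real (f x)) at_top F"
    by (rule filterlim_compose[OF filterlim_real_sequentially assms(2)])
  then have "eventually (\<lambda>x. B / c \<le> real (f x)) F"
    by (simp add: filterlim_at_top)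
  then show ?thesis
    by (rule eventually_mono) (use assms(1) in \<open>simp add: field_simps\<close>)
qed

lemma mono_nat_floor_power:
  fixes q :: real
  assumes "q \<ge> 1"
  shows "mono (\<lambda>n. nat \<lfloor>q ^ Suc n\<rfloor>)"
  using assms by (intro monoI nat_mono floor_mono power_increasing) auto

lemma filterlim_nat_floor_power:
  fixes q :: real
  assumes "q > 1"
  shows "filterlim (\<lambda>n. nat \<lfloor>q ^ Suc n\<rfloor>) at_top sequentially"
  unfolding filterlim_at_top
proof
  fix L :: nat
  show "eventually (\<lambda>n. L \<le> nat \<lfloor>q ^ Suc n\<rfloor>) sequentially"
  proof (rule eventually_mono[OF eventually_le_power[OF assms, of "real L"]])
    fix n assume "real L \<le> q ^ n"
    also have "q ^ n \<le> q ^ Suc n" using assms by (intro power_increasing) auto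
    finally show "L \<le> nat \<lfloor>q ^ Suc n\<rfloor>" by (rule le_nat_floor)
  qed
qed

lemma eventually_nat_floor_power_ratio:
  fixes q :: real
  assumes "q > 1"
  shows "eventually (\<lambda>n. real (nat \<lfloor>q ^ Suc (Suc n)\<rfloor>) \<le> 2 * q * real (nat \<lfloor>q ^ Suc n\<rfloor>)) sequentially"
  using eventually_le_power[OF assms, of 2]
proof (rule eventually_mono)
  fix n assume "2 \<le> q ^ n"
  also have "q ^ n \<le> q ^ Suc n" using assms by (intro power_increasing) auto
  finally have "q ^ Suc n \<le> 2 * real (nat \<lfloor>q ^ Suc n\<rfloor>)"
    using half_le_nat_floor[of "q ^ Suc n"] by linarith
  have "real (nat \<lfloor>q ^ Suc (Suc n)\<rfloor>) \<le> q * q ^ Suc n"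
    using of_nat_floor[of "q ^ Suc (Suc n)"] assms by simp
  also have "\<dots> \<le> q * (2 * real (nat \<lfloor>q ^ Suc n\<rfloor>))"
    using \<open>q ^ Suc n \<le> _\<close> assms by (intro mult_left_mono) auto
  finally show "real (nat \<lfloor>q ^ Suc (Suc n)\<rfloor>) \<le> 2 * q * real (nat \<lfloor>q ^ Suc n\<rfloor>)"
    by simp
qed

lemma eventually_nat_floor_power_gap:
  fixes q :: real
  assumes "q > 1"
  shows "eventually (\<lambda>n. real (nat \<lfloor>q ^ Suc (Suc n)\<rfloor>)
      \<le> 2 * q / (q - 1) * (real (nat \<lfloor>q ^ Suc (Suc n)\<rfloor>) - real (nat \<lfloor>q ^ Suc n\<rfloor>))) sequentially"
  using eventually_le_power[OF assms, of "2 / (q - 1)"]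
proof (rule eventually_mono)
  fix n assume "2 / (q - 1) \<le> q ^ n"
  define Q where "Q = q ^ Suc n"
  have "q ^ n \<le> Q" unfolding Q_def using assms by (intro power_increasing) auto
  have "2 \<le> (q - 1) * q ^ n"
    using \<open>2 / (q - 1) \<le> q ^ n\<close> assms by (simp add: field_simps)
  also have "\<dots> \<le> (q - 1) * Q"
    using \<open>q ^ n \<le> Q\<close> assms by (intro mult_left_mono) auto
  finally have "2 \<le> (q - 1) * Q" .
  moreover have "q * Q - 1 < real (nat \<lfloor>q ^ Suc (Suc n)\<rfloor>)"
      "real (nat \<lfloor>q ^ Suc (Suc n)\<rfloor>) \<le> q * Q" "real (nat \<lfloor>q ^ Suc n\<rfloor>) \<le> Q"
    using real_of_int_floor_gt_diff_one[of "q ^ Suc (Suc n)"] assms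
      of_nat_floor[of "q ^ Suc (Suc n)"] of_nat_floor[of "q ^ Suc n"]
    unfolding Q_def by auto
  moreover have "(q - 1) * Q = q * Q - Q" by (simp add: algebra_simps)
  ultimately have "(q - 1) * Q / 2 \<le> real (nat \<lfloor>q ^ Suc (Suc n)\<rfloor>) - real (nat \<lfloor>q ^ Suc n\<rfloor>)"
    and "real (nat \<lfloor>q ^ Suc (Suc n)\<rfloor>) \<le> q * Q"
    by linarith+
  moreover have "2 * q / (q - 1) * ((q - 1) * Q / 2) = q * Q"
    using assms by (simp add: field_simps)
  ultimately have "real (nat \<lfloor>q ^ Suc (Suc n)\<rfloor>) \<le> 2 * q / (q - 1) * ((q - 1) * Q / 2)"
    by simp
  also have "\<dots> \<le> 2 * q / (q - 1) * (real (nat \<lfloor>q ^ Suc (Suc n)\<rfloor>) - real (nat \<lfloor>q ^ Suc n\<rfloor>))"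
    using assms \<open>(q - 1) * Q / 2 \<le> _\<close> by (intro mult_left_mono) auto
  finally show "real (nat \<lfloor>q ^ Suc (Suc n)\<rfloor>)
      \<le> 2 * q / (q - 1) * (real (nat \<lfloor>q ^ Suc (Suc n)\<rfloor>) - real (nat \<lfloor>q ^ Suc n\<rfloor>))" .
qed

lemma dilated_index_dominates:
  fixes a :: "nat \<Rightarrow> real"
  assumes apos: "\<And>n. n \<ge> 1 \<Longrightarrow> a n > 0" and amono: "\<And>n. n \<ge> 1 \<Longrightarrow> a n \<le> a (Suc n)"
    and aliminf: "liminf (\<lambda>n. ereal (a (2 * n) / a n)) > 1" and "\<epsilon> > 0"
  obtains D N where "D > 0" "\<And>m n. N \<le> m \<Longrightarrow> D * m \<le> n \<Longrightarrow> a m \<le> \<epsilon> * a n"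
proof -
  obtain z where z: "1 < ereal z" "ereal z < liminf (\<lambda>n. ereal (a (2 * n) / a n))"
    using ereal_dense2[OF aliminf] by blast
  then have "z > 1" by simp
  from less_LiminfD[OF z(2)] obtain N0 where N0: "\<And>n. n \<ge> N0 \<Longrightarrow> z < a (2 * n) / a n"
    by (auto simp: eventually_sequentially)
  define N where "N = max N0 1"
  have doubling: "z * a n \<le> a (2 * n)" if "n \<ge> N" for n
    using N0[of n] apos[of n] that unfolding N_def by (simp add: field_simps)
  have iterated: "z ^ k * a n \<le> a (2 ^ k * n)" if "n \<ge> N" for k n
  proof (induction k)
    case (Suc k)
    have "z ^ Suc k * a n \<le> z * a (2 ^ k * n)"
      using Suc \<open>z > 1\<close> by (simp add: mult.assoc mult_left_mono)
    also have "\<dots> \<le> a (2 ^ Suc k * n)"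
      using doubling[of "2 ^ k * n"] that order.trans[of N n "2 ^ k * n"] by (simp add: mult.assoc)
    finally show ?case .
  qed simp
  obtain k where "1 / \<epsilon> < z ^ k" using real_arch_pow[OF \<open>z > 1\<close>] by blast
  then have "1 \<le> \<epsilon> * z ^ k" using \<open>\<epsilon> > 0\<close> by (simp add: field_simps)
  show thesis
  proof (rule that[of "2 ^ k" N])
    fix m n assume "N \<le> m" "2 ^ k * m \<le> n"
    then have "1 \<le> m" unfolding N_def by simp
    have "a m \<le> \<epsilon> * (z ^ k * a m)"
      using \<open>1 \<le> \<epsilon> * z ^ k\<close> apos[OF \<open>1 \<le> m\<close>] mult_right_mono[of 1 "\<epsilon> * z ^ k" "a m"] by simp
    also have "\<dots> \<le> \<epsilon> * a (2 ^ k * m)"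
      using iterated[OF \<open>N \<le> m\<close>] \<open>\<epsilon> > 0\<close> by simp
    also have "\<dots> \<le> \<epsilon> * a n"
      using mono_from_Suc[of 1 a, OF amono] \<open>1 \<le> m\<close> \<open>2 ^ k * m \<le> n\<close> \<open>\<epsilon> > 0\<close>
      by (simp add: order.trans[OF \<open>1 \<le> m\<close>])
    finally show "a m \<le> \<epsilon> * a n" .
  qed simp
qed

section \<open>Products of distinct coordinates\<close>

definition cross_exceeds :: "'i set \<Rightarrow> real \<Rightarrow> ('i \<Rightarrow> real \<times> real) \<Rightarrow> bool" where
  "cross_exceeds S t w \<longleftrightarrow> (\<exists>s\<in>S. \<exists>s'\<in>S. s \<noteq> s' \<and> t \<le> \<bar>fst (w s) * snd (w s')\<bar>)"

lemma cross_exceeds_cong: "(\<And>s. s \<in> S \<Longrightarrow> w s = w' s) \<Longrightarrow> cross_exceeds S t w = cross_exceeds S t w'"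
  unfolding cross_exceeds_def by (intro bex_cong refl) auto

lemma cross_exceeds_subset: "cross_exceeds S t w \<Longrightarrow> S \<subseteq> T \<Longrightarrow> cross_exceeds T t w"
  unfolding cross_exceeds_def by (metis subsetD)

lemma cross_exceeds_le: "cross_exceeds S t w \<Longrightarrow> t' \<le> t \<Longrightarrow> cross_exceeds S t' w"
  unfolding cross_exceeds_def by (meson order_trans)

lemma cross_exceeds_reindex:
  assumes "bij_betw g T S"
  shows "cross_exceeds T t (w \<circ> g) = cross_exceeds S t w"
proof
  assume "cross_exceeds T t (w \<circ> g)"
  then obtain r r' where "r \<in> T" "r' \<in> T" "r \<noteq> r'" "t \<le> \<bar>fst (w (g r)) * snd (w (g r'))\<bar>"
    unfolding cross_exceeds_def by auto
  moreover have "g r \<noteq> g r'"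
    using assms \<open>r \<in> T\<close> \<open>r' \<in> T\<close> \<open>r \<noteq> r'\<close> by (auto simp: bij_betw_def inj_on_eq_iff)
  ultimately show "cross_exceeds S t w"
    using bij_betw_apply[OF assms] unfolding cross_exceeds_def by blast
next
  assume "cross_exceeds S t w"
  then obtain s s' where "s \<in> S" "s' \<in> S" "s \<noteq> s'" "t \<le> \<bar>fst (w s) * snd (w s')\<bar>"
    unfolding cross_exceeds_def by auto
  moreover obtain r r' where "r \<in> T" "r' \<in> T" "s = g r" "s' = g r'"
    using bij_betw_imp_surj_on[OF assms] \<open>s \<in> S\<close> \<open>s' \<in> S\<close> by blast
  ultimately show "cross_exceeds T t (w \<circ> g)"
    unfolding cross_exceeds_def by (intro bexI[of _ r] bexI[of _ r']) auto
qed

lemma cross_exceeds_Un3: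
  assumes "cross_exceeds (A \<union> B \<union> C) t w"
  shows "cross_exceeds (A \<union> B) t w \<or> cross_exceeds (A \<union> C) t w \<or> cross_exceeds (B \<union> C) t w"
proof -
  obtain s s' where ss': "s \<in> A \<union> B \<union> C" "s' \<in> A \<union> B \<union> C" "s \<noteq> s'" "t \<le> \<bar>fst (w s) * snd (w s')\<bar>"
    using assms unfolding cross_exceeds_def by auto
  have in_D: "cross_exceeds D t w" if "s \<in> D" "s' \<in> D" for D
    unfolding cross_exceeds_def using that ss' by (intro bexI[of _ s] bexI[of _ s']) auto
  have "(s \<in> A \<union> B \<and> s' \<in> A \<union> B) \<or> (s \<in> A \<union> C \<and> s' \<in> A \<union> C) \<or> (s \<in> B \<union> C \<and> s' \<in> B \<union> C)"
    using ss'(1,2) by auto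
  then show ?thesis using in_D by metis
qed

lemma Collect_cross_exceeds:
  "{x \<in> A. cross_exceeds S t (f x)} = (\<Union>s\<in>S. \<Union>s'\<in>S - {s}. {x \<in> A. t \<le> \<bar>fst (f x s) * snd (f x s')\<bar>})"
proof (intro set_eqI iffI)
  fix x assume "x \<in> {x \<in> A. cross_exceeds S t (f x)}"
  then obtain s s' where "x \<in> A" "s \<in> S" "s' \<in> S - {s}" "t \<le> \<bar>fst (f x s) * snd (f x s')\<bar>"
    unfolding cross_exceeds_def by auto
  then show "x \<in> (\<Union>s\<in>S. \<Union>s'\<in>S - {s}. {x \<in> A. t \<le> \<bar>fst (f x s) * snd (f x s')\<bar>})" by auto
next
  fix x assume "x \<in> (\<Union>s\<in>S. \<Union>s'\<in>S - {s}. {x \<in> A. t \<le> \<bar>fst (f x s) * snd (f x s')\<bar>})"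
  then obtain s s' where "x \<in> A" "s \<in> S" "s' \<in> S" "s \<noteq> s'" "t \<le> \<bar>fst (f x s) * snd (f x s')\<bar>"
    by auto
  then show "x \<in> {x \<in> A. cross_exceeds S t (f x)}"
    unfolding cross_exceeds_def by (intro CollectI conjI bexI[of _ s] bexI[of _ s']) auto
qed

abbreviation pair_borel :: "(real \<times> real) measure" where
  "pair_borel \<equiv> borel \<Otimes>\<^sub>M borel"

definition cross_region :: "'i set \<Rightarrow> real \<Rightarrow> ('i \<Rightarrow> real \<times> real) set" where
  "cross_region S t = {w \<in> space (PiM S (\<lambda>_. pair_borel)). cross_exceeds S t w}"

lemma sets_cross_region:
  assumes "finite S"
  shows "cross_region S t \<in> sets (PiM S (\<lambda>_. pair_borel))"
proof -
  have "cross_region S t = (\<Union>s\<in>S. \<Union>s'\<in>S - {s}.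
      {w \<in> space (PiM S (\<lambda>_. pair_borel)). t \<le> \<bar>fst (w s) * snd (w s')\<bar>})"
    unfolding cross_region_def by (rule Collect_cross_exceeds)
  also have "\<dots> \<in> sets (PiM S (\<lambda>_. pair_borel))"
  proof (intro sets.finite_UN assms finite_Diff ballI)
    fix s s' assume "s \<in> S" "s' \<in> S - {s}"
    then have [measurable]: "(\<lambda>w. w s) \<in> measurable (PiM S (\<lambda>_. pair_borel)) pair_borel"
      "(\<lambda>w. w s') \<in> measurable (PiM S (\<lambda>_. pair_borel)) pair_borel"
      by (auto intro: measurable_component_singleton)
    show "{w \<in> space (PiM S (\<lambda>_. pair_borel)). t \<le> \<bar>fst (w s) * snd (w s')\<bar>}
        \<in> sets (PiM S (\<lambda>_. pair_borel))"
      by measurable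
  qed
  finally show ?thesis .
qed

lemma measure_cross_region_bij:
  assumes "prob_space \<mu>" "sets \<mu> = sets pair_borel"
    and "finite S" "finite T" "bij_betw g T S"
  shows "measure (PiM S (\<lambda>_. \<mu>)) (cross_region S t) = measure (PiM T (\<lambda>_. \<mu>)) (cross_region T t)"
proof -
  have sets_PiM_eq: "sets (PiM R (\<lambda>_. \<mu>)) = sets (PiM R (\<lambda>_. pair_borel))" for R
    using assms(2) by (intro sets_PiM_cong) auto
  have space_PiM_eq: "space (PiM R (\<lambda>_. \<mu>)) = space (PiM R (\<lambda>_. pair_borel))" for R
    using sets_eq_imp_space_eq[OF sets_PiM_eq] .
  define h where "h w = (\<lambda>r\<in>T. w (g r))" for w :: "'a \<Rightarrow> real \<times> real"
  have "g \<in> T \<rightarrow> S" and "inj_on g T" using assms(5) by (auto simp: bij_betw_def)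
  then have distr_h: "distr (PiM S (\<lambda>_. \<mu>)) (PiM T (\<lambda>_. \<mu>)) h = PiM T (\<lambda>_. \<mu>)"
    unfolding h_def using distr_PiM_reindex[of S "\<lambda>_. \<mu>" g T] assms(1) by simp
  have h_meas: "h \<in> measurable (PiM S (\<lambda>_. \<mu>)) (PiM T (\<lambda>_. \<mu>))"
    unfolding h_def using \<open>g \<in> T \<rightarrow> S\<close>
    by (intro measurable_restrict measurable_component_singleton) auto
  have "cross_exceeds T t (h w) = cross_exceeds S t w" for w
  proof -
    have "cross_exceeds T t (h w) = cross_exceeds T t (w \<circ> g)"
      unfolding h_def by (rule cross_exceeds_cong) simp
    also have "\<dots> = cross_exceeds S t w" by (rule cross_exceeds_reindex[OF assms(5)])
    finally show ?thesis .
  qed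
  moreover have "w \<in> space (PiM S (\<lambda>_. pair_borel)) \<Longrightarrow> h w \<in> space (PiM T (\<lambda>_. pair_borel))" for w
    unfolding h_def by (auto simp: space_PiM space_pair_measure)
  ultimately have "h -` cross_region T t \<inter> space (PiM S (\<lambda>_. \<mu>)) = cross_region S t"
    unfolding cross_region_def space_PiM_eq by blast
  moreover have "cross_region T t \<in> sets (PiM T (\<lambda>_. \<mu>))"
    unfolding sets_PiM_eq by (rule sets_cross_region[OF assms(4)])
  ultimately show ?thesis
    using measure_distr[OF h_meas] distr_h by metis
qed

section \<open>Tail probabilities of rows and arrays\<close>

locale iid_pair_array = prob_space M for M :: "'s measure" +
  fixes U V :: "nat \<Rightarrow> nat \<Rightarrow> 's \<Rightarrow> real"
  assumes indep: "indep_vars (\<lambda>_. pair_borel) (\<lambda>(k, i) x. (U k i x, V k i x)) ({1..} \<times> {1..})"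
    and ident: "\<And>k i. k \<ge> 1 \<Longrightarrow> i \<ge> 1 \<Longrightarrow>
      distr M pair_borel (\<lambda>x. (U k i x, V k i x)) = distr M pair_borel (\<lambda>x. (U 1 1 x, V 1 1 x))"
begin

abbreviation UV :: "nat \<times> nat \<Rightarrow> 's \<Rightarrow> real \<times> real" where
  "UV \<equiv> \<lambda>(k, i) x. (U k i x, V k i x)"

definition pair_law :: "(real \<times> real) measure" where
  "pair_law = distr M pair_borel (UV (1, 1))"

definition cross_event :: "(nat \<times> nat) set \<Rightarrow> real \<Rightarrow> 's set" where
  "cross_event S t = {x \<in> space M. cross_exceeds S t (\<lambda>s. UV s x)}"

definition row_tail :: "nat \<Rightarrow> real \<Rightarrow> real" where
  "row_tail n t = prob (cross_event ({1} \<times> {1..n}) t)"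

lemma measurable_UV: "s \<in> {1..} \<times> {1..} \<Longrightarrow> UV s \<in> measurable M pair_borel"
  using indep by (auto simp: indep_vars_def)

lemma sets_cross_event:
  assumes "finite S" "S \<subseteq> {1..} \<times> {1..}"
  shows "cross_event S t \<in> events"
proof -
  have "cross_event S t = (\<Union>s\<in>S. \<Union>s'\<in>S - {s}. {x \<in> space M. t \<le> \<bar>fst (UV s x) * snd (UV s' x)\<bar>})"
    unfolding cross_event_def by (rule Collect_cross_exceeds)
  also have "\<dots> \<in> events"
  proof (intro sets.finite_UN assms finite_Diff ballI)
    fix s s' assume "s \<in> S" "s' \<in> S - {s}"
    then have [measurable]: "UV s \<in> measurable M pair_borel" "UV s' \<in> measurable M pair_borel"
      using assms(2) by (auto intro!: measurable_UV)
    show "{x \<in> space M. t \<le> \<bar>fst (UV s x) * snd (UV s' x)\<bar>} \<in> events"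
      by measurable
  qed
  finally show ?thesis .
qed

lemma distr_UV_eq_PiM:
  assumes "S \<subseteq> {1..} \<times> {1..}" "S \<noteq> {}"
  shows "distr M (PiM S (\<lambda>_. pair_borel)) (\<lambda>x. \<lambda>s\<in>S. UV s x) = PiM S (\<lambda>_. pair_law)"
proof -
  \<comment> \<open>\<open>indep_vars_iff_distr_eq_PiM\<close> asks for a random variable at every index, not only on \<open>S\<close>.\<close>
  define UV' where "UV' s = (if s \<in> S then UV s else (\<lambda>_. (0, 0)))" for s
  have UV'_indep: "indep_vars (\<lambda>_. pair_borel) UV' S"
    using indep_vars_subset[OF indep assms(1)]
    by (rule indep_vars_cong[THEN iffD1, rotated -1]) (auto simp: UV'_def)
  have UV_meas: "s \<in> S \<Longrightarrow> UV s \<in> measurable M pair_borel" for s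
    using assms(1) by (auto intro!: measurable_UV)
  then have UV'_meas: "random_variable pair_borel (UV' s)" for s
    by (simp add: UV'_def)
  have "distr M (PiM S (\<lambda>_. pair_borel)) (\<lambda>x. \<lambda>s\<in>S. UV' s x)
      = PiM S (\<lambda>s. distr M pair_borel (UV' s))"
    using indep_vars_iff_distr_eq_PiM[OF assms(2) UV'_meas] UV'_indep by simp
  also have "(\<lambda>x. \<lambda>s\<in>S. UV' s x) = (\<lambda>x. \<lambda>s\<in>S. UV s x)"
    by (auto simp: UV'_def fun_eq_iff)
  also have "PiM S (\<lambda>s. distr M pair_borel (UV' s)) = PiM S (\<lambda>_. pair_law)"
  proof (rule PiM_cong[OF refl])
    fix s assume "s \<in> S"
    with assms(1) obtain k i where "s = (k, i)" "k \<ge> 1" "i \<ge> 1" by auto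
    then show "distr M pair_borel (UV' s) = pair_law"
      using \<open>s \<in> S\<close> ident[of k i] by (simp add: UV'_def pair_law_def)
  qed
  finally show ?thesis .
qed

lemma prob_cross_event_eq_PiM:
  assumes "finite S" "S \<subseteq> {1..} \<times> {1..}"
  shows "prob (cross_event S t) = measure (PiM S (\<lambda>_. pair_law)) (cross_region S t)"
proof (cases "S = {}")
  case True
  then show ?thesis by (simp add: cross_event_def cross_region_def cross_exceeds_def)
next
  case False
  have UV_S_meas: "(\<lambda>x. \<lambda>s\<in>S. UV s x) \<in> measurable M (PiM S (\<lambda>_. pair_borel))"
    using assms(2) measurable_UV by (intro measurable_restrict) auto
  have "(\<lambda>x. \<lambda>s\<in>S. UV s x) -` cross_region S t \<inter> space M = cross_event S t"
  proof -
    have "cross_exceeds S t (\<lambda>s\<in>S. UV s x) = cross_exceeds S t (\<lambda>s. UV s x)" for x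
      by (rule cross_exceeds_cong) simp
    moreover have "(\<lambda>s\<in>S. UV s x) \<in> space (PiM S (\<lambda>_. pair_borel))" for x
      by (simp add: space_PiM space_pair_measure)
    ultimately show ?thesis unfolding cross_region_def cross_event_def by auto
  qed
  then have "measure (distr M (PiM S (\<lambda>_. pair_borel)) (\<lambda>x. \<lambda>s\<in>S. UV s x)) (cross_region S t)
      = prob (cross_event S t)"
    using measure_distr[OF UV_S_meas sets_cross_region[OF assms(1)]] by (simp only:)
  then show ?thesis unfolding distr_UV_eq_PiM[OF assms(2) False] by (rule sym)
qed

lemma prob_cross_event_eq_row_tail:
  assumes "finite S" "S \<subseteq> {1..} \<times> {1..}"
  shows "prob (cross_event S t) = row_tail (card S) t"
proof -
  define R where "R = {1::nat} \<times> {1..card S}"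
  have R: "finite R" "R \<subseteq> {1..} \<times> {1..}" "card R = card S"
    unfolding R_def by (auto simp: card_cartesian_product)
  then obtain g where "bij_betw g R S"
    using finite_same_card_bij[OF R(1) assms(1)] by metis
  moreover have "prob_space pair_law" "sets pair_law = sets pair_borel"
    unfolding pair_law_def using measurable_UV[of "(1, 1)"] by (auto intro!: prob_space_distr)
  ultimately have "measure (PiM S (\<lambda>_. pair_law)) (cross_region S t)
      = measure (PiM R (\<lambda>_. pair_law)) (cross_region R t)"
    by (intro measure_cross_region_bij assms(1) R(1))
  then show ?thesis
    unfolding row_tail_def R_def[symmetric] prob_cross_event_eq_PiM[OF assms]
      prob_cross_event_eq_PiM[OF R(1,2)] R(3) .
qed

lemma prob_cross_event_row:
  "k \<ge> 1 \<Longrightarrow> prob (cross_event ({k} \<times> {1..n}) t) = row_tail n t"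
  by (subst prob_cross_event_eq_row_tail) (auto simp: card_cartesian_product)

lemma row_tail_nonneg: "0 \<le> row_tail n t"
  unfolding row_tail_def by simp

lemma row_tail_le_1: "row_tail n t \<le> 1"
  unfolding row_tail_def by simp

lemma row_tail_mono:
  assumes "n \<le> m"
  shows "row_tail n t \<le> row_tail m t"
  unfolding row_tail_def
proof (rule finite_measure_mono)
  show "cross_event ({1} \<times> {1..n}) t \<subseteq> cross_event ({1} \<times> {1..m}) t"
    using assms unfolding cross_event_def by (auto elim!: cross_exceeds_subset)
qed (auto intro!: sets_cross_event)

lemma row_tail_antimono:
  assumes "t \<le> t'"
  shows "row_tail n t' \<le> row_tail n t"
  unfolding row_tail_def
proof (rule finite_measure_mono)
  show "cross_event ({1} \<times> {1..n}) t' \<subseteq> cross_event ({1} \<times> {1..n}) t"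
    using assms unfolding cross_event_def by (auto elim!: cross_exceeds_le)
qed (auto intro!: sets_cross_event)

lemma row_tail_le_3:
  "row_tail n t \<le> 3 * row_tail (n - n div 3) t"
proof -
  define d where "d = n div 3"
  define A where "A = {1::nat} \<times> {1..d}"
  define B where "B = {1::nat} \<times> {d+1..2*d}"
  define C where "C = {1::nat} \<times> {2*d+1..n}"
  have "3 * d \<le> n" unfolding d_def by simp
  then have ABC: "{1} \<times> {1..n} = A \<union> B \<union> C" unfolding A_def B_def C_def by auto
  have card: "card A = d" "card B = d" "card C = n - 2 * d"
    unfolding A_def B_def C_def by (simp_all add: card_cartesian_product)
  have blocks: "finite A" "finite B" "finite C"
      "A \<subseteq> {1..} \<times> {1..}" "B \<subseteq> {1..} \<times> {1..}" "C \<subseteq> {1..} \<times> {1..}"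
    unfolding A_def B_def C_def by auto
  have two_blocks: "prob (cross_event (D \<union> E) t) \<le> row_tail (n - d) t"
    if "D \<in> {A, B, C}" "E \<in> {A, B, C}" for D E
  proof -
    have "card (D \<union> E) \<le> n - d"
      using that card card_Un_le[of D E] \<open>3 * d \<le> n\<close> by auto
    then show ?thesis
      using that blocks by (auto simp: prob_cross_event_eq_row_tail intro!: row_tail_mono)
  qed
  have events: "cross_event (D \<union> E) t \<in> events" if "D \<in> {A, B, C}" "E \<in> {A, B, C}" for D E
    using that blocks by (auto intro!: sets_cross_event)
  have "cross_event (A \<union> B \<union> C) t
      \<subseteq> cross_event (A \<union> B) t \<union> cross_event (A \<union> C) t \<union> cross_event (B \<union> C) t"
    unfolding cross_event_def using cross_exceeds_Un3 by blast
  then have "row_tail n t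
      \<le> prob (cross_event (A \<union> B) t \<union> cross_event (A \<union> C) t \<union> cross_event (B \<union> C) t)"
    unfolding row_tail_def ABC using events by (intro finite_measure_mono) auto
  also have "\<dots> \<le> prob (cross_event (A \<union> B) t) + prob (cross_event (A \<union> C) t)
      + prob (cross_event (B \<union> C) t)"
    using events by (intro order.trans[OF measure_Un_le] add_mono measure_Un_le) auto
  also have "\<dots> \<le> 3 * row_tail (n - d) t"
    using two_blocks[of A B] two_blocks[of A C] two_blocks[of B C] by auto
  finally show ?thesis unfolding d_def .
qed

lemma row_tail_le_pow_3:
  "(real n - 2) * (2/3)^L \<le> real m - 2 \<Longrightarrow> row_tail n t \<le> 3^L * row_tail m t"
proof (induction L arbitrary: n)
  case 0
  then show ?case by (simp add: row_tail_mono)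
next
  case (Suc L)
  have "n \<le> 3 * (n div 3) + 2" by linarith
  then have "real (n - n div 3) - 2 \<le> (real n - 2) * (2/3)"
    by (simp add: of_nat_diff)
  then have "(real (n - n div 3) - 2) * (2/3)^L \<le> (real n - 2) * (2/3)^Suc L"
    by (simp add: mult_right_mono)
  then have "row_tail (n - n div 3) t \<le> 3^L * row_tail m t"
    using Suc.prems by (intro Suc.IH) linarith
  then show ?case
    using row_tail_le_3[of n t] by simp
qed

lemma row_tail_comparable:
  assumes "r > 0"
  obtains K where "K > 0"
    "\<And>n x t. 8 \<le> x \<Longrightarrow> real n \<le> r * x \<Longrightarrow> row_tail n t \<le> K * row_tail (nat \<lfloor>x\<rfloor>) t"
proof -
  obtain L where L: "(2/3::real)^L < 1 / (2 * r)"
    using real_arch_pow_inv[of "1 / (2 * r)" "2/3::real"] assms by auto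
  have "row_tail n t \<le> 3^L * row_tail (nat \<lfloor>x\<rfloor>) t" if "8 \<le> x" "real n \<le> r * x" for n x t
  proof (rule row_tail_le_pow_3)
    have "(real n - 2) * (2/3)^L \<le> (r * x) * (2/3)^L"
      using that by (intro mult_right_mono) auto
    also have "\<dots> \<le> x / 2"
      using L assms \<open>8 \<le> x\<close> by (simp add: field_simps)
    also have "\<dots> \<le> real (nat \<lfloor>x\<rfloor>) - 2"
      using real_of_int_floor_gt_diff_one[of x] \<open>8 \<le> x\<close> by linarith
    finally show "(real n - 2) * (2/3)^L \<le> real (nat \<lfloor>x\<rfloor>) - 2" .
  qed
  then show ?thesis by (intro that[of "3^L"]) auto
qed

lemma row_tail_le_scaled_row_tail:
  assumes "c > 0" "r > 0"
  obtains K where "K > 0" "\<And>m k t t'. 8 \<le> c * real k \<Longrightarrow> real m \<le> r * real k \<Longrightarrow> t' \<le> t \<Longrightarrow>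
      row_tail (nat \<lfloor>c * real m\<rfloor>) t \<le> K * row_tail (nat \<lfloor>c * real k\<rfloor>) t'"
proof -
  obtain K where K: "K > 0"
    "\<And>n x t. 8 \<le> x \<Longrightarrow> real n \<le> r * x \<Longrightarrow> row_tail n t \<le> K * row_tail (nat \<lfloor>x\<rfloor>) t"
    using row_tail_comparable[OF assms(2)] by auto
  have "row_tail (nat \<lfloor>c * real m\<rfloor>) t \<le> K * row_tail (nat \<lfloor>c * real k\<rfloor>) t'"
    if "8 \<le> c * real k" "real m \<le> r * real k" "t' \<le> t" for m k t t'
  proof -
    have "real (nat \<lfloor>c * real m\<rfloor>) \<le> c * real m"
      using assms(1) by simp
    also have "\<dots> \<le> r * (c * real k)"
      using \<open>real m \<le> r * real k\<close> assms(1) by (simp add: mult.left_commute)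
    finally have "row_tail (nat \<lfloor>c * real m\<rfloor>) t \<le> K * row_tail (nat \<lfloor>c * real k\<rfloor>) t"
      using \<open>8 \<le> c * real k\<close> by (rule K(2)[rotated])
    also have "\<dots> \<le> K * row_tail (nat \<lfloor>c * real k\<rfloor>) t'"
      using K(1) \<open>t' \<le> t\<close> by (intro mult_left_mono row_tail_antimono) auto
    finally show ?thesis .
  qed
  with K(1) show ?thesis by (rule that)
qed

lemma indep_events_rows:
  assumes "J \<subseteq> {1..}"
  shows "indep_events (\<lambda>k. space M - cross_event ({k} \<times> {1..n k}) t) J"
proof -
  define R where "R k = {k} \<times> {1..n k}" for k
  have "disjoint_family_on R J"
    unfolding R_def disjoint_family_on_def by auto
  then have "indep_vars (\<lambda>k. PiM (R k) (\<lambda>_. pair_borel)) (\<lambda>k x. \<lambda>s\<in>R k. UV s x) J"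
    using assms unfolding R_def by (intro indep_vars_restrict[OF indep]) auto
  then have "indep_events (\<lambda>k. {x \<in> space M. \<not> cross_exceeds (R k) t (\<lambda>s\<in>R k. UV s x)}) J"
  proof (rule indep_eventsI_indep_vars)
    fix k
    have "{w \<in> space (PiM (R k) (\<lambda>_. pair_borel)). \<not> cross_exceeds (R k) t w}
        = space (PiM (R k) (\<lambda>_. pair_borel)) - cross_region (R k) t"
      unfolding cross_region_def by auto
    also have "\<dots> \<in> sets (PiM (R k) (\<lambda>_. pair_borel))"
      using sets_cross_region[of "R k" t] unfolding R_def by auto
    finally show "{w \<in> space (PiM (R k) (\<lambda>_. pair_borel)). \<not> cross_exceeds (R k) t w}
        \<in> sets (PiM (R k) (\<lambda>_. pair_borel))" .
  qed
  moreover have "space M - cross_event (R k) t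
      = {x \<in> space M. \<not> cross_exceeds (R k) t (\<lambda>s\<in>R k. UV s x)}" for k
  proof -
    have "cross_exceeds (R k) t (\<lambda>s\<in>R k. UV s x) = cross_exceeds (R k) t (\<lambda>s. UV s x)" for x
      by (rule cross_exceeds_cong) simp
    then show ?thesis unfolding cross_event_def by auto
  qed
  ultimately show ?thesis
    unfolding R_def[symmetric] by (simp only:)
qed

lemma prob_UN_rows:
  assumes "finite J" "J \<subseteq> {1..}"
  shows "prob (\<Union>k\<in>J. cross_event ({k} \<times> {1..n k}) t) = 1 - (\<Prod>k\<in>J. 1 - row_tail (n k) t)"
proof (cases "J = {}")
  case False
  define E where "E k = cross_event ({k} \<times> {1..n k}) t" for k
  have events: "E k \<in> events" if "k \<in> J" for k
    using that assms(2) unfolding E_def by (intro sets_cross_event) auto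
  have "prob (\<Inter>k\<in>J. space M - E k) = (\<Prod>k\<in>J. prob (space M - E k))"
    using indep_events_rows[OF assms(2), of n t] False assms(1)
    unfolding indep_events_def E_def by blast
  also have "\<dots> = (\<Prod>k\<in>J. 1 - row_tail (n k) t)"
  proof (intro prod.cong refl)
    fix k assume "k \<in> J"
    then have "k \<ge> 1" using assms(2) by auto
    then show "prob (space M - E k) = 1 - row_tail (n k) t"
      using prob_compl[OF events[OF \<open>k \<in> J\<close>]] prob_cross_event_row[OF \<open>k \<ge> 1\<close>]
      unfolding E_def by simp
  qed
  also have "(\<Inter>k\<in>J. space M - E k) = space M - (\<Union>k\<in>J. E k)"
    using False by auto
  finally show ?thesis
    using prob_compl[of "\<Union>k\<in>J. E k"] events assms(1) unfolding E_def by auto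
qed simp

definition array_tail :: "nat \<Rightarrow> real \<Rightarrow> real \<Rightarrow> real" where
  "array_tail N c t = prob (\<Union>m\<in>{1..N}. cross_event ({m} \<times> {1..nat \<lfloor>c * real m\<rfloor>}) t)"

lemma array_tail_le_sum:
  "array_tail N c t \<le> (\<Sum>m=1..N. row_tail (nat \<lfloor>c * real m\<rfloor>) t)"
proof -
  have "array_tail N c t \<le> (\<Sum>m=1..N. prob (cross_event ({m} \<times> {1..nat \<lfloor>c * real m\<rfloor>}) t))"
    unfolding array_tail_def
    by (intro finite_measure_subadditive_finite) (auto intro!: sets_cross_event)
  also have "\<dots> = (\<Sum>m=1..N. row_tail (nat \<lfloor>c * real m\<rfloor>) t)"
    by (intro sum.cong refl prob_cross_event_row) auto
  finally show ?thesis .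
qed

lemma sum_le_2_array_tail:
  assumes "array_tail N c t \<le> 1/2"
  shows "(\<Sum>m=1..N. row_tail (nat \<lfloor>c * real m\<rfloor>) t) \<le> 2 * array_tail N c t"
proof -
  define P where "P = array_tail N c t"
  define s where "s = (\<Sum>m=1..N. row_tail (nat \<lfloor>c * real m\<rfloor>) t)"
  have "(\<Prod>m=1..N. 1 - row_tail (nat \<lfloor>c * real m\<rfloor>) t) = 1 - P"
    unfolding P_def array_tail_def by (subst prob_UN_rows) auto
  then have "(1 - P) * (1 + s) \<le> 1"
    unfolding s_def using prod_one_minus_mult_one_plus_sum_le row_tail_nonneg row_tail_le_1
    by metis
  moreover have "0 \<le> s" unfolding s_def by (intro sum_nonneg row_tail_nonneg)
  moreover have "P \<le> 1/2" using assms unfolding P_def .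
  ultimately have "s / 2 \<le> P"
    using mult_right_mono[of "1/2" "1 - P" s] by (simp add: algebra_simps)
  then show ?thesis unfolding P_def s_def by simp
qed

lemma array_tail_le_card_row_tail:
  assumes "c \<ge> 0"
  shows "array_tail N c t \<le> real N * row_tail (nat \<lfloor>c * real N\<rfloor>) t"
proof -
  have "array_tail N c t \<le> (\<Sum>m=1..N. row_tail (nat \<lfloor>c * real m\<rfloor>) t)"
    by (rule array_tail_le_sum)
  also have "\<dots> \<le> (\<Sum>m=1..N. row_tail (nat \<lfloor>c * real N\<rfloor>) t)"
    using assms by (intro sum_mono row_tail_mono nat_mono floor_mono mult_left_mono) auto
  finally show ?thesis by simp
qed

lemma card_row_tail_le_array_tail:
  assumes "c > 0" "r > 0"
  obtains K where "K > 0"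
    "\<And>N m t. 16 \<le> c * real N \<Longrightarrow> real m \<le> r * real N \<Longrightarrow> array_tail N c t \<le> 1/2 \<Longrightarrow>
      real N * row_tail (nat \<lfloor>c * real m\<rfloor>) t \<le> K * array_tail N c t"
proof -
  have "2 * r > 0" using assms(2) by simp
  obtain K where K: "K > 0" "\<And>m k t t'. 8 \<le> c * real k \<Longrightarrow> real m \<le> 2 * r * real k \<Longrightarrow> t' \<le> t \<Longrightarrow>
      row_tail (nat \<lfloor>c * real m\<rfloor>) t \<le> K * row_tail (nat \<lfloor>c * real k\<rfloor>) t'"
    using row_tail_le_scaled_row_tail[OF assms(1) \<open>2 * r > 0\<close>] by metis
  have "real N * row_tail (nat \<lfloor>c * real m\<rfloor>) t \<le> (4 * K) * array_tail N c t"
    if "16 \<le> c * real N" "real m \<le> r * real N" "array_tail N c t \<le> 1/2" for N m t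
  proof -
    define upper where "upper = {N div 2 + 1..N}"
    have "row_tail (nat \<lfloor>c * real m\<rfloor>) t \<le> K * row_tail (nat \<lfloor>c * real k\<rfloor>) t" if "k \<in> upper" for k
    proof (rule K(2))
      have "real N \<le> 2 * real k" using that unfolding upper_def by auto
      then have "c * real N \<le> 2 * (c * real k)" "r * real N \<le> r * (2 * real k)"
        using assms by simp_all
      then show "8 \<le> c * real k" "real m \<le> 2 * r * real k"
        using \<open>16 \<le> c * real N\<close> \<open>real m \<le> r * real N\<close> by simp_all
    qed simp
    then have "real (card upper) * row_tail (nat \<lfloor>c * real m\<rfloor>) t
        \<le> K * (\<Sum>k\<in>upper. row_tail (nat \<lfloor>c * real k\<rfloor>) t)"
      by (auto simp: sum_distrib_left intro: sum_bounded_below)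
    also have "\<dots> \<le> K * (\<Sum>k=1..N. row_tail (nat \<lfloor>c * real k\<rfloor>) t)"
      using K(1) by (intro mult_left_mono sum_mono2) (auto simp: upper_def row_tail_nonneg)
    also have "\<dots> \<le> K * (2 * array_tail N c t)"
      using K(1) sum_le_2_array_tail[OF \<open>array_tail N c t \<le> 1/2\<close>] by simp
    finally have upper_bound:
      "real (card upper) * row_tail (nat \<lfloor>c * real m\<rfloor>) t \<le> 2 * K * array_tail N c t"
      by simp
    have "real N \<le> 2 * real (card upper)" unfolding upper_def by auto
    then have "real N * row_tail (nat \<lfloor>c * real m\<rfloor>) t
        \<le> 2 * (real (card upper) * row_tail (nat \<lfloor>c * real m\<rfloor>) t)"
      using mult_right_mono[OF _ row_tail_nonneg, of "real N" "2 * real (card upper)"]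
      by (simp add: mult.assoc)
    also have "\<dots> \<le> (4 * K) * array_tail N c t"
      using upper_bound by simp
    finally show ?thesis .
  qed
  with K(1) show ?thesis by (intro that[of "4 * K"]) auto
qed

lemma Collect_row_eq_cross_event:
  assumes "\<And>i. 1 \<le> i \<Longrightarrow> P i \<longleftrightarrow> i \<le> n"
  shows "{x \<in> space M. \<exists>i j. 1 \<le> i \<and> 1 \<le> j \<and> i \<noteq> j \<and> P i \<and> P j \<and> \<bar>U k i x * V k j x\<bar> \<ge> t}
    = cross_event ({k} \<times> {1..n}) t" (is "?L = _")
proof (intro set_eqI iffI)
  fix x assume "x \<in> ?L"
  then obtain i j where ij: "x \<in> space M" "1 \<le> i" "1 \<le> j" "i \<noteq> j" "P i" "P j"
      "t \<le> \<bar>U k i x * V k j x\<bar>"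
    by auto
  then have "(k, i) \<in> {k} \<times> {1..n}" "(k, j) \<in> {k} \<times> {1..n}"
    using assms by auto
  then show "x \<in> cross_event ({k} \<times> {1..n}) t"
    unfolding cross_event_def cross_exceeds_def using ij
    by (intro CollectI conjI bexI[of _ "(k, i)"] bexI[of _ "(k, j)"]) auto
next
  fix x assume "x \<in> cross_event ({k} \<times> {1..n}) t"
  then obtain s s' where "x \<in> space M" "s \<in> {k} \<times> {1..n}" "s' \<in> {k} \<times> {1..n}" "s \<noteq> s'"
      "t \<le> \<bar>fst (UV s x) * snd (UV s' x)\<bar>"
    unfolding cross_event_def cross_exceeds_def by auto
  moreover obtain i j where "s = (k, i)" "s' = (k, j)" "1 \<le> i" "1 \<le> j" "i \<le> n" "j \<le> n"
    using \<open>s \<in> _\<close> \<open>s' \<in> _\<close> by auto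
  ultimately show "x \<in> ?L"
    using assms by (intro CollectI conjI exI[of _ i] exI[of _ j]) auto
qed

lemma prob_row_event:
  "prob {x \<in> space M. \<exists>i j. 1 \<le> i \<and> 1 \<le> j \<and> i \<noteq> j \<and> i \<le> n \<and> j \<le> n \<and> \<bar>U 1 i x * V 1 j x\<bar> \<ge> t}
    = row_tail n t"
  unfolding row_tail_def by (subst Collect_row_eq_cross_event) auto

lemma prob_row_event_floor:
  "prob {x \<in> space M. \<exists>i j. 1 \<le> i \<and> 1 \<le> j \<and> i \<noteq> j \<and> real i \<le> y \<and> real j \<le> y
      \<and> \<bar>U 1 i x * V 1 j x\<bar> \<ge> t}
    = row_tail (nat \<lfloor>y\<rfloor>) t"
  unfolding row_tail_def by (subst Collect_row_eq_cross_event) (auto simp: real_le_iff_le_nat_floor)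

lemma prob_array_event:
  "prob {x \<in> space M. \<exists>m i j. 1 \<le> m \<and> real m \<le> y \<and> 1 \<le> i \<and> 1 \<le> j \<and> i \<noteq> j
      \<and> real i \<le> c * real m \<and> real j \<le> c * real m \<and> \<bar>U m i x * V m j x\<bar> \<ge> t}
    = array_tail (nat \<lfloor>y\<rfloor>) c t"
proof -
  have "{x \<in> space M. \<exists>m i j. 1 \<le> m \<and> real m \<le> y \<and> 1 \<le> i \<and> 1 \<le> j \<and> i \<noteq> j
      \<and> real i \<le> c * real m \<and> real j \<le> c * real m \<and> \<bar>U m i x * V m j x\<bar> \<ge> t}
    = (\<Union>m\<in>{1..nat \<lfloor>y\<rfloor>}. {x \<in> space M. \<exists>i j. 1 \<le> i \<and> 1 \<le> j \<and> i \<noteq> j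
      \<and> real i \<le> c * real m \<and> real j \<le> c * real m \<and> \<bar>U m i x * V m j x\<bar> \<ge> t})"
  proof -
    have ex_iff: "(\<exists>m i j. 1 \<le> m \<and> real m \<le> y \<and> Q m i j) \<longleftrightarrow> (\<exists>m\<in>{1..nat \<lfloor>y\<rfloor>}. \<exists>i j. Q m i j)"
      for Q :: "nat \<Rightarrow> nat \<Rightarrow> nat \<Rightarrow> bool"
      by (metis atLeastAtMost_iff real_le_iff_le_nat_floor)
    show ?thesis unfolding ex_iff by blast
  qed
  also have "\<dots> = (\<Union>m\<in>{1..nat \<lfloor>y\<rfloor>}. cross_event ({m} \<times> {1..nat \<lfloor>c * real m\<rfloor>}) t)"
    by (intro SUP_cong refl Collect_row_eq_cross_event real_le_iff_le_nat_floor)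
  finally show ?thesis unfolding array_tail_def by simp
qed

section \<open>The three summability conditions\<close>

lemma summable_row_tail_of_scaled:
  assumes "c > 0" "summable (\<lambda>n. row_tail (nat \<lfloor>c * real n\<rfloor>) (t n))"
  shows "summable (\<lambda>n. row_tail n (t n))"
proof -
  obtain K where K: "K > 0"
    "\<And>n x t. 8 \<le> x \<Longrightarrow> real n \<le> 1 / c * x \<Longrightarrow> row_tail n t \<le> K * row_tail (nat \<lfloor>x\<rfloor>) t"
    using row_tail_comparable[of "1 / c"] assms(1) by auto
  have "eventually (\<lambda>n. 8 \<le> c * real n) sequentially"
    using eventually_le_mult_at_top[OF assms(1) filterlim_ident] .
  then have "eventually (\<lambda>n. norm (row_tail n (t n)) \<le> K * row_tail (nat \<lfloor>c * real n\<rfloor>) (t n)) sequentially"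
    by (rule eventually_mono) (use K(2) assms(1) row_tail_nonneg in auto)
  then show ?thesis
    using summable_mult[OF assms(2), of K] by (rule summable_comparison_test_ev)
qed

lemma summable_scaled_row_tail:
  assumes "c > 0" "D > 0" and dominated: "\<And>m n. N \<le> m \<Longrightarrow> D * m \<le> n \<Longrightarrow> t m \<le> s n"
    and "summable (\<lambda>n. row_tail n (t n))"
  shows "summable (\<lambda>n. row_tail (nat \<lfloor>c * real n\<rfloor>) (s n))"
proof -
  obtain K where K: "K > 0"
    "\<And>n x t. 8 \<le> x \<Longrightarrow> real n \<le> 2 * c * real D * x \<Longrightarrow> row_tail n t \<le> K * row_tail (nat \<lfloor>x\<rfloor>) t"
    using row_tail_comparable[of "2 * c * real D"] assms(1,2) by auto
  have bound: "row_tail (nat \<lfloor>c * real n\<rfloor>) (s n) \<le> K * row_tail (n div D) (t (n div D))"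
    if "D * max N 8 \<le> n" for n
  proof -
    define m where "m = n div D"
    have "max N 8 \<le> m"
      unfolding m_def using div_le_mono[OF that, of D] assms(2) by simp
    have "n = D * m + n mod D" "n mod D < D"
      unfolding m_def using assms(2) by simp_all
    moreover have "D \<le> D * m" using \<open>max N 8 \<le> m\<close> by simp
    ultimately have "D * m \<le> n" "n \<le> D * m + D * m"
      by linarith+
    then have "real n \<le> real D * real m + real D * real m"
      by (metis of_nat_add of_nat_le_iff of_nat_mult)
    have "real (nat \<lfloor>c * real n\<rfloor>) \<le> c * real n"
      using of_nat_floor assms(1) by simp
    also have "\<dots> \<le> c * (real D * real m + real D * real m)"
      using \<open>real n \<le> _\<close> assms(1) by (intro mult_left_mono) auto
    finally have "real (nat \<lfloor>c * real n\<rfloor>) \<le> 2 * c * real D * real m"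
      by (simp add: algebra_simps)
    then have "row_tail (nat \<lfloor>c * real n\<rfloor>) (t m) \<le> K * row_tail m (t m)"
      using K(2)[of "real m"] \<open>max N 8 \<le> m\<close> by simp
    moreover have "row_tail (nat \<lfloor>c * real n\<rfloor>) (s n) \<le> row_tail (nat \<lfloor>c * real n\<rfloor>) (t m)"
      using dominated \<open>max N 8 \<le> m\<close> \<open>D * m \<le> n\<close> by (intro row_tail_antimono) auto
    ultimately show ?thesis unfolding m_def by simp
  qed
  have "summable (\<lambda>n. K * row_tail (n div D) (t (n div D)))"
    using assms(2,4) row_tail_nonneg by (intro summable_mult summable_comp_div[of "\<lambda>n. row_tail n (t n)"])
  then show ?thesis
    by (rule summable_comparison_test') (use bound row_tail_nonneg in auto)
qed

lemma summable_array_tail: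
  fixes N :: "nat \<Rightarrow> nat"
  assumes "c > 0" "\<rho> > 0" "\<gamma> > 0" "mono N" "filterlim N at_top sequentially"
    and ratio: "eventually (\<lambda>n. real (N (Suc n)) \<le> \<rho> * real (N n)) sequentially"
    and gap: "eventually (\<lambda>n. real (N (Suc n)) \<le> \<gamma> * (real (N (Suc n)) - real (N n))) sequentially"
    and \<tau>_mono: "\<And>i j. 1 \<le> i \<Longrightarrow> i \<le> j \<Longrightarrow> \<tau> i \<le> \<tau> j"
    and "summable (\<lambda>k. row_tail (nat \<lfloor>c * real k\<rfloor>) (\<tau> k))"
  shows "summable (\<lambda>n. array_tail (N n) c (\<tau> (N n)))"
proof -
  define g where "g k = row_tail (nat \<lfloor>c * real k\<rfloor>) (\<tau> k)" for k
  define P where "P n = row_tail (nat \<lfloor>c * real (N n)\<rfloor>) (\<tau> (N n))" for n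
  obtain K where K: "K > 0" "\<And>m k t t'. 8 \<le> c * real k \<Longrightarrow> real m \<le> \<rho> * real k \<Longrightarrow> t' \<le> t \<Longrightarrow>
      row_tail (nat \<lfloor>c * real m\<rfloor>) t \<le> K * row_tail (nat \<lfloor>c * real k\<rfloor>) t'"
    using row_tail_le_scaled_row_tail[OF assms(1,2)] by metis
  have "eventually (\<lambda>n. norm (array_tail (N (Suc n)) c (\<tau> (N (Suc n))))
      \<le> \<gamma> * K * (\<Sum>k\<in>{N n<..N (Suc n)}. g k)) sequentially"
    using ratio gap eventually_le_mult_at_top[OF assms(1,5), of 8]
  proof eventually_elim
    case (elim n)
    have "P (Suc n) \<le> K * g k" if "k \<in> {N n<..N (Suc n)}" for k
    proof -
      have "c * real (N n) \<le> c * real k" "\<rho> * real (N n) \<le> \<rho> * real k"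
        using that assms(1,2) by simp_all
      then show ?thesis
        unfolding P_def g_def using elim(1,3) that \<tau>_mono[of k "N (Suc n)"] by (intro K(2)) auto
    qed
    then have "real (card {N n<..N (Suc n)}) * P (Suc n) \<le> (\<Sum>k\<in>{N n<..N (Suc n)}. K * g k)"
      by (rule sum_bounded_below)
    moreover have "real (card {N n<..N (Suc n)}) = real (N (Suc n)) - real (N n)"
      using monoD[OF assms(4), of n "Suc n"] by (simp add: of_nat_diff)
    ultimately have "(real (N (Suc n)) - real (N n)) * P (Suc n) \<le> K * (\<Sum>k\<in>{N n<..N (Suc n)}. g k)"
      by (simp add: sum_distrib_left)
    then have "\<gamma> * ((real (N (Suc n)) - real (N n)) * P (Suc n))
        \<le> \<gamma> * (K * (\<Sum>k\<in>{N n<..N (Suc n)}. g k))"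
      using assms(3) by (intro mult_left_mono) auto
    moreover have "real (N (Suc n)) * P (Suc n) \<le> \<gamma> * ((real (N (Suc n)) - real (N n)) * P (Suc n))"
      using mult_right_mono[OF elim(2) row_tail_nonneg] unfolding P_def by (simp add: mult.assoc)
    moreover have "norm (array_tail (N (Suc n)) c (\<tau> (N (Suc n)))) \<le> real (N (Suc n)) * P (Suc n)"
      using array_tail_le_card_row_tail[of c] assms(1) unfolding P_def array_tail_def by simp
    ultimately show ?case by (simp add: mult.assoc)
  qed
  moreover have "summable (\<lambda>n. \<Sum>k\<in>{N n<..N (Suc n)}. g k)"
    using summable_iff_summable_blocks[OF assms(4,5), of g] assms(9) row_tail_nonneg
    unfolding g_def by blast
  ultimately have "summable (\<lambda>n. array_tail (N (Suc n)) c (\<tau> (N (Suc n))))"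
    by (rule summable_comparison_test_ev[OF _ summable_mult])
  then show ?thesis by (rule summable_Suc_iff[THEN iffD1])
qed

lemma summable_row_tail_of_array_tail:
  fixes N :: "nat \<Rightarrow> nat"
  assumes "c > 0" "\<rho> > 0" "mono N" "filterlim N at_top sequentially"
    and ratio: "eventually (\<lambda>n. real (N (Suc n)) \<le> \<rho> * real (N n)) sequentially"
    and \<tau>_mono: "\<And>i j. 1 \<le> i \<Longrightarrow> i \<le> j \<Longrightarrow> \<tau> i \<le> \<tau> j"
    and "summable (\<lambda>n. array_tail (N n) c (\<tau> (N n)))"
  shows "summable (\<lambda>k. row_tail (nat \<lfloor>c * real k\<rfloor>) (\<tau> k))"
proof -
  define g where "g k = row_tail (nat \<lfloor>c * real k\<rfloor>) (\<tau> k)" for k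
  define T where "T n = array_tail (N n) c (\<tau> (N n))" for n
  define P where "P n = row_tail (nat \<lfloor>c * real (N (Suc n))\<rfloor>) (\<tau> (N n))" for n
  obtain K where K: "K > 0" "\<And>N' m t. 16 \<le> c * real N' \<Longrightarrow> real m \<le> \<rho> * real N' \<Longrightarrow>
      array_tail N' c t \<le> 1/2 \<Longrightarrow> real N' * row_tail (nat \<lfloor>c * real m\<rfloor>) t \<le> K * array_tail N' c t"
    using card_row_tail_le_array_tail[OF assms(1,2)] by metis
  have "T \<longlonglongrightarrow> 0"
    using assms(7) unfolding T_def by (rule summable_LIMSEQ_zero)
  then have small: "eventually (\<lambda>n. T n < 1/2) sequentially"
    by (rule order_tendstoD) simp
  have "eventually (\<lambda>n. 1 \<le> N n) sequentially"
    using assms(4) by (simp add: filterlim_at_top)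
  then have "eventually (\<lambda>n. norm (\<Sum>k\<in>{N n<..N (Suc n)}. g k) \<le> \<rho> * K * T n) sequentially"
    using ratio small eventually_le_mult_at_top[OF assms(1,4), of 16]
  proof eventually_elim
    case (elim n)
    have "g k \<le> P n" if "k \<in> {N n<..N (Suc n)}" for k
      unfolding g_def P_def using that elim(1) assms(1) \<tau>_mono
      by (intro order.trans[OF row_tail_antimono row_tail_mono] nat_mono floor_mono mult_left_mono) auto
    then have "(\<Sum>k\<in>{N n<..N (Suc n)}. g k) \<le> real (card {N n<..N (Suc n)}) * P n"
      by (rule sum_bounded_above)
    also have "\<dots> \<le> real (N (Suc n)) * P n"
      using row_tail_nonneg unfolding P_def by (intro mult_right_mono) auto
    also have "\<dots> \<le> \<rho> * (real (N n) * P n)"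
      using mult_right_mono[OF elim(2) row_tail_nonneg] unfolding P_def by (simp add: mult.assoc)
    also have "real (N n) * P n \<le> K * T n"
      unfolding P_def using elim(2,3,4) unfolding T_def by (intro K(2)) auto
    finally show ?case
      using assms(2) g_def by (simp add: mult.assoc sum_nonneg row_tail_nonneg)
  qed
  then have "summable (\<lambda>n. \<Sum>k\<in>{N n<..N (Suc n)}. g k)"
    by (rule summable_comparison_test_ev[OF _ summable_mult]) (simp add: T_def assms(7))
  then show ?thesis
    using summable_iff_summable_blocks[OF assms(3,4), of g] row_tail_nonneg unfolding g_def by blast
qed


lemma summable_row_tail_iff_scaled:
  fixes a :: "nat \<Rightarrow> real"
  assumes apos: "\<And>n. n \<ge> 1 \<Longrightarrow> a n > 0" and amono: "\<And>n. n \<ge> 1 \<Longrightarrow> a n \<le> a (Suc n)"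
    and aliminf: "liminf (\<lambda>n. ereal (a (2 * n) / a n)) > 1" and "c > 0"
  shows "summable (\<lambda>n. row_tail n (a n))
    \<longleftrightarrow> (\<forall>\<epsilon>>0. summable (\<lambda>n. row_tail (nat \<lfloor>c * real n\<rfloor>) (\<epsilon> * a n)))"
proof (intro iffI allI impI)
  fix \<epsilon> :: real assume "summable (\<lambda>n. row_tail n (a n))" "\<epsilon> > 0"
  obtain D N where "D > 0" "\<And>m n. N \<le> m \<Longrightarrow> D * m \<le> n \<Longrightarrow> a m \<le> \<epsilon> * a n"
    using dilated_index_dominates[OF apos amono aliminf \<open>\<epsilon> > 0\<close>] by blast
  then show "summable (\<lambda>n. row_tail (nat \<lfloor>c * real n\<rfloor>) (\<epsilon> * a n))"
    using \<open>c > 0\<close> \<open>summable (\<lambda>n. row_tail n (a n))\<close> by (intro summable_scaled_row_tail)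
next
  assume "\<forall>\<epsilon>>0. summable (\<lambda>n. row_tail (nat \<lfloor>c * real n\<rfloor>) (\<epsilon> * a n))"
  then have "summable (\<lambda>n. row_tail (nat \<lfloor>c * real n\<rfloor>) (1 * a n))"
    using zero_less_one by blast
  then show "summable (\<lambda>n. row_tail n (a n))"
    using summable_row_tail_of_scaled[OF \<open>c > 0\<close>] by simp
qed

lemma summable_scaled_row_tail_iff_array_tail:
  fixes a :: "nat \<Rightarrow> real" and q :: real
  assumes amono: "\<And>n. n \<ge> 1 \<Longrightarrow> a n \<le> a (Suc n)" and "c > 0" "q > 1" "\<epsilon> > 0"
  shows "summable (\<lambda>n. row_tail (nat \<lfloor>c * real n\<rfloor>) (\<epsilon> * a n))
    \<longleftrightarrow> summable (\<lambda>n. array_tail (nat \<lfloor>q ^ Suc n\<rfloor>) c (\<epsilon> * a (nat \<lfloor>q ^ Suc n\<rfloor>)))"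
proof -
  have \<tau>_mono: "\<epsilon> * a i \<le> \<epsilon> * a j" if "1 \<le> i" "i \<le> j" for i j
    using mono_from_Suc[of 1 a, OF amono] that \<open>\<epsilon> > 0\<close> by simp
  have "2 * q > 0" "2 * q / (q - 1) > 0" "1 \<le> q" using \<open>q > 1\<close> by auto
  note N_props = mono_nat_floor_power[OF \<open>1 \<le> q\<close>] filterlim_nat_floor_power[OF \<open>q > 1\<close>]
    eventually_nat_floor_power_ratio[OF \<open>q > 1\<close>]
  show ?thesis
    using summable_array_tail[where \<tau> = "\<lambda>k. \<epsilon> * a k", OF \<open>c > 0\<close> \<open>2 * q > 0\<close>
        \<open>2 * q / (q - 1) > 0\<close> N_props eventually_nat_floor_power_gap[OF \<open>q > 1\<close>] \<tau>_mono]
      summable_row_tail_of_array_tail[where \<tau> = "\<lambda>k. \<epsilon> * a k", OF \<open>c > 0\<close> \<open>2 * q > 0\<close>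
        N_props \<tau>_mono]
    by blast
qed

end

theorem lemma3p1:
  fixes M :: "'s measure"
    and U V :: "nat \<Rightarrow> nat \<Rightarrow> 's \<Rightarrow> real"
    and a :: "nat \<Rightarrow> real"
    and c q :: real
  assumes "prob_space M"
    and indep: "prob_space.indep_vars M (\<lambda>_. borel \<Otimes>\<^sub>M borel)
                  (\<lambda>(k, i) x. (U k i x, V k i x)) ({1..} \<times> {1..})"
    and ident: "\<And>k i. k \<ge> 1 \<Longrightarrow> i \<ge> 1 \<Longrightarrow>
                  distr M (borel \<Otimes>\<^sub>M borel) (\<lambda>x. (U k i x, V k i x))
                  = distr M (borel \<Otimes>\<^sub>M borel) (\<lambda>x. (U 1 1 x, V 1 1 x))"
    and apos: "\<And>n. n \<ge> 1 \<Longrightarrow> a n > 0"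
    and amono: "\<And>n. n \<ge> 1 \<Longrightarrow> a n \<le> a (Suc n)"
    and alim: "(\<lambda>n. a (Suc n) / a n) \<longlonglongrightarrow> 1"
    and aliminf: "liminf (\<lambda>n. ereal (a (2 * n) / a n)) > 1"
    and "c > 0" and "q > 1"
  shows
    "(summable (\<lambda>n. measure M {x \<in> space M. \<exists>i j. 1 \<le> i \<and> 1 \<le> j \<and> i \<noteq> j
         \<and> i \<le> Suc n \<and> j \<le> Suc n \<and> \<bar>U 1 i x * V 1 j x\<bar> \<ge> a (Suc n)})
      \<longleftrightarrow>
     (\<forall>\<epsilon>>0. summable (\<lambda>n. measure M {x \<in> space M. \<exists>i j. 1 \<le> i \<and> 1 \<le> j \<and> i \<noteq> j
         \<and> real i \<le> c * real (Suc n) \<and> real j \<le> c * real (Suc n)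
         \<and> \<bar>U 1 i x * V 1 j x\<bar> \<ge> \<epsilon> * a (Suc n)})))
   \<and>
    ((\<forall>\<epsilon>>0. summable (\<lambda>n. measure M {x \<in> space M. \<exists>i j. 1 \<le> i \<and> 1 \<le> j \<and> i \<noteq> j
         \<and> real i \<le> c * real (Suc n) \<and> real j \<le> c * real (Suc n)
         \<and> \<bar>U 1 i x * V 1 j x\<bar> \<ge> \<epsilon> * a (Suc n)}))
      \<longleftrightarrow>
     (\<forall>\<epsilon>>0. summable (\<lambda>n. measure M {x \<in> space M. \<exists>m i j. 1 \<le> m \<and> real m \<le> q ^ Suc n
         \<and> 1 \<le> i \<and> 1 \<le> j \<and> i \<noteq> j
         \<and> real i \<le> c * real m \<and> real j \<le> c * real m
         \<and> \<bar>U m i x * V m j x\<bar> \<ge> \<epsilon> * a (nat \<lfloor>q ^ Suc n\<rfloor>)})))"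
proof -
  interpret iid_pair_array M U V
    unfolding iid_pair_array_def iid_pair_array_axioms_def using assms(1) indep ident by blast
  have shifts: "summable (\<lambda>n. row_tail (Suc n) (a (Suc n))) \<longleftrightarrow> summable (\<lambda>n. row_tail n (a n))"
    "summable (\<lambda>n. row_tail (nat \<lfloor>c * real (Suc n)\<rfloor>) (\<epsilon> * a (Suc n)))
      \<longleftrightarrow> summable (\<lambda>n. row_tail (nat \<lfloor>c * real n\<rfloor>) (\<epsilon> * a n))" for \<epsilon>
    by (rule summable_Suc_iff)+
  show ?thesis
    unfolding prob_row_event prob_row_event_floor prob_array_event shifts
    using summable_row_tail_iff_scaled[where a = a, OF apos amono aliminf \<open>c > 0\<close>]
      summable_scaled_row_tail_iff_array_tail[where a = a, OF amono \<open>c > 0\<close> \<open>q > 1\<close>]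
    by simp
qed

end
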